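(* Let $f$ be a complex-valued harmonic function on $\mathbb{C}$. If $\operatorname{int}S\neq\varnothing$, then $f(\mathbb{C})$ is either a single point or a line. In either case, $S=\mathbb{C}$ and there exists $w_0\in\mathbb{C}$ with $\mathrm{Val}(f,w_0)=\infty$.
   Context: Writing $f=u+iv$, $J_f=u_xv_y-u_yv_x$ and $S=\{z\in\mathbb{C}: J_f(z)=0\}$. $\mathrm{Val}(f,w)$ is the number (possibly infinite) of distinct $z\in\mathbb{C}$ with $f(z)=w$. *)

theory Defs
  imports "HOL-Analysis.Analysis"
begin

definition dx :: "(complex \<Rightarrow> 'a::real_normed_vector) \<Rightarrow> complex \<Rightarrow> 'a" where
  "dx g z = vector_derivative (\<lambda>t::real. g (z + of_real t)) (at 0)"

definition dy :: "(complex \<Rightarrow> 'a::real_normed_vector) \<Rightarrow> complex \<Rightarrow> 'a" where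
  "dy g z = vector_derivative (\<lambda>t::real. g (z + \<i> * of_real t)) (at 0)"

definition harmonic :: "(complex \<Rightarrow> complex) \<Rightarrow> bool" where
  "harmonic f \<longleftrightarrow>
     (\<forall>z. f differentiable at z) \<and>
     (\<forall>z. dx f differentiable at z) \<and> (\<forall>z. dy f differentiable at z) \<and>
     continuous_on UNIV (dx (dx f)) \<and> continuous_on UNIV (dy (dx f)) \<and>
     continuous_on UNIV (dx (dy f)) \<and> continuous_on UNIV (dy (dy f)) \<and>
     (\<forall>z. dx (dx f) z + dy (dy f) z = 0)"

text \<open>Jacobian J_f = u_x v_y - u_y v_x where f = u + i v.\<close>
definition jac :: "(complex \<Rightarrow> complex) \<Rightarrow> complex \<Rightarrow> real" where
  "jac f z = Re (dx f z) * Im (dy f z) - Re (dy f z) * Im (dx f z)"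

definition critset :: "(complex \<Rightarrow> complex) \<Rightarrow> complex set" where
  "critset f = {z. jac f z = 0}"

definition Val_infinite :: "(complex \<Rightarrow> complex) \<Rightarrow> complex \<Rightarrow> bool" where
  "Val_infinite f w \<longleftrightarrow> infinite {z. f z = w}"

definition is_line :: "complex set \<Rightarrow> bool" where
  "is_line L \<longleftrightarrow> (\<exists>a b. b \<noteq> 0 \<and> L = {a + of_real t * b | t. True})"

end

theory Submission
  imports Defs "HOL-Complex_Analysis.Complex_Analysis"
begin

text \<open>
  Let f_z = (f_x - i f_y)/2 and f_zbar = (f_x + i f_y)/2. For harmonic f the mixed partials
  commute, so f_z and the conjugate of f_zbar are entire, and J_f = |f_z|^2 - |f_zbar|^2.
  If J_f vanishes on an open set, f_z / conj f_zbar is unimodular there, hence constant by the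
  maximum modulus principle, and by analytic continuation f_z = c conj f_zbar on the whole plane
  with |c| = 1. Thus J_f vanishes identically, and writing c = m^2 the differential of f is
  k |-> m Re (K k) with K = 2 m conj f_zbar entire; integrating, f = a + m Re F with F' = K.
  So f(C) lies on the line a + m R: either F is constant and f is constant, or, by the little
  Picard theorem, Re F attains every real value, each on an infinite set.
\<close>

definition dir_deriv :: "complex \<Rightarrow> (complex \<Rightarrow> 'a::real_normed_vector) \<Rightarrow> complex \<Rightarrow> 'a" where
  "dir_deriv e g z = vector_derivative (\<lambda>t::real. g (z + of_real t * e)) (at 0)"

lemma dx_eq_dir_deriv: "dx = dir_deriv 1"
  by (intro ext) (simp add: dx_def dir_deriv_def)

lemma dy_eq_dir_deriv: "dy = dir_deriv \<i>"
  by (intro ext) (simp add: dy_def dir_deriv_def mult.commute)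

lemma has_vector_derivative_along_line:
  fixes g :: "complex \<Rightarrow> 'a::real_normed_vector"
  assumes "(g has_derivative D) (at (w + of_real s * e))"
  shows "((\<lambda>t::real. g (w + of_real t * e)) has_vector_derivative D e) (at s)"
proof -
  have "((\<lambda>t::real. w + of_real t * e) has_derivative (\<lambda>h. of_real h * e)) (at s)"
    by (auto intro!: derivative_eq_intros)
  from has_derivative_compose[OF this assms]
  have "((\<lambda>t. g (w + of_real t * e)) has_derivative (\<lambda>h. D (of_real h * e))) (at s)"
    by (simp add: o_def)
  moreover have "(\<lambda>h. D (of_real h * e)) = (\<lambda>h. h *\<^sub>R D e)"
    using has_derivative_linear[OF assms] by (auto simp: scaleR_conv_of_real[symmetric] linear_scale)
  ultimately show ?thesis
    by (simp add: has_vector_derivative_def)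
qed

lemma dir_deriv_eq:
  assumes "(g has_derivative D) (at z)"
  shows "dir_deriv e g z = D e"
  using has_vector_derivative_along_line[of g D z 0 e] assms
  by (simp add: dir_deriv_def vector_derivative_at)

lemma has_real_derivative_along_line:
  fixes g :: "complex \<Rightarrow> 'a::real_normed_vector"
  assumes "g differentiable at (w + of_real s * e)" and "bounded_linear L"
  shows "((\<lambda>t. L (g (w + of_real t * e))) has_real_derivative L (dir_deriv e g (w + of_real s * e))) (at s)"
proof -
  obtain D where D: "(g has_derivative D) (at (w + of_real s * e))"
    using assms(1) by (auto simp: differentiable_def)
  show ?thesis
    using bounded_linear.has_vector_derivative[OF assms(2) has_vector_derivative_along_line[OF D]]
    by (simp add: dir_deriv_eq[OF D] has_real_derivative_iff_has_vector_derivative)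
qed

lemma second_difference_mean_value:
  fixes f :: "complex \<Rightarrow> 'a::real_normed_vector"
  assumes f: "\<And>z. f differentiable at z" and fa: "\<And>z. dir_deriv a f differentiable at z"
    and L: "bounded_linear L" and "h > 0"
  obtains s t where "0 < s" "s < h" "0 < t" "t < h"
    "L (f (z + of_real h * a + of_real h * b)) - L (f (z + of_real h * b))
       - L (f (z + of_real h * a)) + L (f z)
     = h\<^sup>2 * L (dir_deriv b (dir_deriv a f) (z + of_real s * a + of_real t * b))"
proof -
  define \<phi> where "\<phi> s = L (f (z + of_real h * b + of_real s * a)) - L (f (z + of_real s * a))" for s
  define \<phi>' where "\<phi>' s = L (dir_deriv a f (z + of_real h * b + of_real s * a))
                        - L (dir_deriv a f (z + of_real s * a))" for s
  have "(\<phi> has_real_derivative \<phi>' s) (at s)" for s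
    unfolding \<phi>_def \<phi>'_def using f L by (intro DERIV_diff has_real_derivative_along_line) auto
  then obtain s where s: "0 < s" "s < h" and "\<phi> h - \<phi> 0 = (h - 0) * \<phi>' s"
    using MVT2[OF \<open>h > 0\<close>, of \<phi> \<phi>'] by blast
  moreover
  define \<psi> where "\<psi> t = L (dir_deriv a f (z + of_real s * a + of_real t * b))" for t
  have "(\<psi> has_real_derivative L (dir_deriv b (dir_deriv a f) (z + of_real s * a + of_real t * b))) (at t)" for t
    unfolding \<psi>_def using fa L by (intro has_real_derivative_along_line) auto
  then obtain t where t: "0 < t" "t < h"
    and "\<psi> h - \<psi> 0 = (h - 0) * L (dir_deriv b (dir_deriv a f) (z + of_real s * a + of_real t * b))"
    using MVT2[OF \<open>h > 0\<close>, of \<psi> "\<lambda>t. L (dir_deriv b (dir_deriv a f) (z + of_real s * a + of_real t * b))"]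
    by blast
  moreover have "\<phi>' s = \<psi> h - \<psi> 0"
    by (simp add: \<phi>'_def \<psi>_def algebra_simps)
  ultimately show ?thesis
    using that[OF s t] by (simp add: \<phi>_def algebra_simps power2_eq_square)
qed

lemma norm_scaled_sum_less:
  fixes a b :: complex
  assumes "0 < s" "s < h" "0 < t" "t < h"
  shows "norm (of_real s * a + of_real t * b) < h * (norm a + norm b + 1)"
proof -
  have "norm (of_real s * a + of_real t * b) \<le> s * norm a + t * norm b"
    using norm_triangle_ineq[of "of_real s * a" "of_real t * b"] assms by (simp add: norm_mult)
  also have "\<dots> \<le> h * norm a + h * norm b"
    using assms by (intro add_mono mult_right_mono) auto
  also have "\<dots> < h * (norm a + norm b + 1)"
    using assms by (simp add: algebra_simps)
  finally show ?thesis .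
qed

text \<open>The second difference of f over the parallelogram spanned by h a and h b is symmetric
  in a and b; by the mean value theorem it is h^2 times either mixed derivative at nearby points.\<close>

lemma mixed_dir_derivs_agree_nearby:
  fixes f :: "complex \<Rightarrow> 'a::real_normed_vector" and L :: "'a \<Rightarrow> real"
  assumes f: "\<And>z. f differentiable at z"
    and fa: "\<And>z. dir_deriv a f differentiable at z" and fb: "\<And>z. dir_deriv b f differentiable at z"
    and L: "bounded_linear L" and "\<delta> > 0"
  shows "\<exists>p q. dist p z < \<delta> \<and> dist q z < \<delta> \<and>
    L (dir_deriv b (dir_deriv a f) p) = L (dir_deriv a (dir_deriv b f) q)"
proof -
  define h where "h = \<delta> / (norm a + norm b + 1)"
  have "norm a + norm b + 1 > 0"
    by (smt (verit) norm_ge_zero)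
  then have "h > 0" and \<delta>: "\<delta> = h * (norm a + norm b + 1)"
    using \<open>\<delta> > 0\<close> by (simp_all add: h_def)
  obtain s t where st: "0 < s" "s < h" "0 < t" "t < h"
    and A: "L (f (z + of_real h * a + of_real h * b)) - L (f (z + of_real h * b))
              - L (f (z + of_real h * a)) + L (f z)
            = h\<^sup>2 * L (dir_deriv b (dir_deriv a f) (z + of_real s * a + of_real t * b))"
    using second_difference_mean_value[OF f fa L \<open>h > 0\<close>] by blast
  obtain s' t' where st': "0 < s'" "s' < h" "0 < t'" "t' < h"
    and B: "L (f (z + of_real h * b + of_real h * a)) - L (f (z + of_real h * a))
              - L (f (z + of_real h * b)) + L (f z)
            = h\<^sup>2 * L (dir_deriv a (dir_deriv b f) (z + of_real s' * b + of_real t' * a))"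
    using second_difference_mean_value[OF f fb L \<open>h > 0\<close>] by blast
  have "L (dir_deriv b (dir_deriv a f) (z + of_real s * a + of_real t * b))
      = L (dir_deriv a (dir_deriv b f) (z + of_real s' * b + of_real t' * a))"
    using A B \<open>h > 0\<close> by (simp add: algebra_simps)
  moreover have "dist (z + of_real s * a + of_real t * b) z < \<delta>"
    "dist (z + of_real s' * b + of_real t' * a) z < \<delta>"
    unfolding \<delta> dist_norm using norm_scaled_sum_less[OF st, of a b]
      norm_scaled_sum_less[OF st', of b a] by (simp_all add: add.commute)
  ultimately show ?thesis
    by blast
qed

lemma dir_deriv_commute:
  fixes f :: "complex \<Rightarrow> 'a::euclidean_space"
  assumes f: "\<And>z. f differentiable at z"
    and fa: "\<And>z. dir_deriv a f differentiable at z" and fb: "\<And>z. dir_deriv b f differentiable at z"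
    and cont_ab: "isCont (dir_deriv b (dir_deriv a f)) z"
    and cont_ba: "isCont (dir_deriv a (dir_deriv b f)) z"
  shows "dir_deriv b (dir_deriv a f) z = dir_deriv a (dir_deriv b f) z"
proof (rule euclidean_eqI)
  fix i :: 'a
  let ?A = "\<lambda>p. dir_deriv b (dir_deriv a f) p \<bullet> i"
  let ?B = "\<lambda>p. dir_deriv a (dir_deriv b f) p \<bullet> i"
  show "?A z = ?B z"
  proof (rule ccontr)
    define e where "e = \<bar>?A z - ?B z\<bar>"
    assume "?A z \<noteq> ?B z"
    then have "e / 2 > 0"
      by (simp add: e_def)
    have "isCont ?A z" "isCont ?B z"
      by (intro continuous_inner cont_ab cont_ba continuous_const)+
    then obtain d1 d2 where "d1 > 0" and d1: "\<And>p. dist p z < d1 \<Longrightarrow> \<bar>?A p - ?A z\<bar> < e / 2"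
      and "d2 > 0" and d2: "\<And>p. dist p z < d2 \<Longrightarrow> \<bar>?B p - ?B z\<bar> < e / 2"
      using \<open>e / 2 > 0\<close> unfolding continuous_at_eps_delta dist_real_def by blast
    obtain p q where p: "dist p z < d1" and q: "dist q z < d2" and "?A p = ?B q"
      using mixed_dir_derivs_agree_nearby[OF f fa fb bounded_linear_inner_left[of i],
          where z = z and \<delta> = "min d1 d2"] \<open>d1 > 0\<close> \<open>d2 > 0\<close> by auto
    with d1[OF p] d2[OF q] show False
      unfolding e_def by (simp add: abs_if split: if_splits)
  qed
qed

lemma dx_eq_derivative: "(g has_derivative D) (at z) \<Longrightarrow> dx g z = D 1"
  by (simp add: dx_eq_dir_deriv dir_deriv_eq)

lemma dy_eq_derivative: "(g has_derivative D) (at z) \<Longrightarrow> dy g z = D \<i>"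
  by (simp add: dy_eq_dir_deriv dir_deriv_eq)

lemma harmonic_mixed_partials_eq:
  assumes "harmonic f"
  shows "dy (dx f) z = dx (dy f) z"
  using assms dir_deriv_commute[of f 1 \<i> z]
  by (simp add: harmonic_def dx_eq_dir_deriv dy_eq_dir_deriv continuous_on_eq_continuous_at)

lemma linear_complex_decomp:
  fixes D :: "complex \<Rightarrow> 'a::real_normed_vector"
  assumes "linear D"
  shows "D k = Re k *\<^sub>R D 1 + Im k *\<^sub>R D \<i>"
proof -
  have "k = Re k *\<^sub>R 1 + Im k *\<^sub>R \<i>"
    by (simp add: complex_eq_iff)
  then have "D k = D (Re k *\<^sub>R 1 + Im k *\<^sub>R \<i>)"
    by (rule arg_cong)
  also have "\<dots> = Re k *\<^sub>R D 1 + Im k *\<^sub>R D \<i>"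
    using assms by (simp add: linear_add linear_scale)
  finally show ?thesis .
qed

lemma has_derivative_eq_partials:
  fixes g :: "complex \<Rightarrow> 'a::real_normed_vector"
  assumes "(g has_derivative D) (at z)"
  shows "D k = Re k *\<^sub>R dx g z + Im k *\<^sub>R dy g z"
  using linear_complex_decomp[OF has_derivative_linear[OF assms], of k]
  unfolding dx_eq_derivative[OF assms] dy_eq_derivative[OF assms] .

lemma has_field_derivative_if_CR:
  assumes "(g has_derivative D) (at z)" and "D \<i> = \<i> * D 1"
  shows "(g has_field_derivative D 1) (at z)"
proof -
  have "D k = D 1 * k" for k
  proof -
    have "D k = D 1 * (of_real (Re k) + \<i> * of_real (Im k))"
      using linear_complex_decomp[OF has_derivative_linear[OF assms(1)], of k] assms(2)
      by (simp add: scaleR_conv_of_real algebra_simps)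
    then show ?thesis
      by (simp add: complex_eq[symmetric])
  qed
  then have "D = (*) (D 1)"
    by (intro ext)
  then show ?thesis
    using assms(1) unfolding has_field_derivative_def by metis
qed

definition dz :: "(complex \<Rightarrow> complex) \<Rightarrow> complex \<Rightarrow> complex" where
  "dz f z = (dx f z - \<i> * dy f z) / 2"

definition dzbar :: "(complex \<Rightarrow> complex) \<Rightarrow> complex \<Rightarrow> complex" where
  "dzbar f z = (dx f z + \<i> * dy f z) / 2"

lemma has_derivative_eq_wirtinger:
  assumes "(f has_derivative D) (at z)"
  shows "D k = dz f z * k + dzbar f z * cnj k"
  by (simp add: has_derivative_eq_partials[OF assms] dz_def dzbar_def scaleR_conv_of_real
      complex_eq_iff field_simps)

lemma jac_eq_wirtinger: "jac f z = (cmod (dz f z))\<^sup>2 - (cmod (dzbar f z))\<^sup>2"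
  unfolding jac_def dz_def dzbar_def cmod_power2 by (simp add: power2_eq_square field_simps)

lemma harmonic_second_partials:
  assumes "harmonic f"
  obtains Da Db where "(dx f has_derivative Da) (at z)" "(dy f has_derivative Db) (at z)"
    "Da \<i> = Db 1" "Db \<i> = - Da 1"
proof -
  have "dx f differentiable at z" "dy f differentiable at z"
    using assms by (simp_all add: harmonic_def)
  then obtain Da Db where Da: "(dx f has_derivative Da) (at z)" and Db: "(dy f has_derivative Db) (at z)"
    by (auto simp: differentiable_def)
  have "dy (dx f) z = dx (dy f) z" and "dx (dx f) z + dy (dy f) z = 0"
    using assms harmonic_mixed_partials_eq by (auto simp: harmonic_def)
  then show ?thesis
    using that[OF Da Db] unfolding dx_eq_derivative[OF Da] dy_eq_derivative[OF Da]
      dx_eq_derivative[OF Db] dy_eq_derivative[OF Db]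
    by (simp add: eq_neg_iff_add_eq_0 add.commute)
qed

lemma harmonic_dz_holomorphic:
  assumes "harmonic f"
  shows "dz f holomorphic_on UNIV"
proof -
  have "dz f field_differentiable at z" for z
  proof -
    obtain Da Db where Da: "(dx f has_derivative Da) (at z)" and Db: "(dy f has_derivative Db) (at z)"
      and CR: "Da \<i> = Db 1" "Db \<i> = - Da 1"
      using harmonic_second_partials[OF assms] .
    have "(dz f has_derivative (\<lambda>k. (Da k - \<i> * Db k) / 2)) (at z)"
      unfolding dz_def[abs_def] by (auto intro!: derivative_eq_intros Da Db)
    moreover have "(Da \<i> - \<i> * Db \<i>) / 2 = \<i> * ((Da 1 - \<i> * Db 1) / 2)"
      unfolding CR by (simp add: algebra_simps)
    ultimately show ?thesis
      unfolding field_differentiable_def by (blast intro: has_field_derivative_if_CR)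
  qed
  then show ?thesis
    by (simp add: holomorphic_on_def field_differentiable_at_within)
qed

lemma harmonic_cnj_dzbar_holomorphic:
  assumes "harmonic f"
  shows "(\<lambda>z. cnj (dzbar f z)) holomorphic_on UNIV"
proof -
  have "(\<lambda>z. cnj (dzbar f z)) field_differentiable at z" for z
  proof -
    obtain Da Db where Da: "(dx f has_derivative Da) (at z)" and Db: "(dy f has_derivative Db) (at z)"
      and CR: "Da \<i> = Db 1" "Db \<i> = - Da 1"
      using harmonic_second_partials[OF assms] .
    have "((\<lambda>z. cnj (dzbar f z)) has_derivative (\<lambda>k. cnj ((Da k + \<i> * Db k) / 2))) (at z)"
      unfolding dzbar_def by (auto intro!: derivative_eq_intros Da Db)
    moreover have "cnj ((Da \<i> + \<i> * Db \<i>) / 2) = \<i> * cnj ((Da 1 + \<i> * Db 1) / 2)"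
      unfolding CR by (simp add: complex_eq_iff)
    ultimately show ?thesis
      unfolding field_differentiable_def by (blast intro: has_field_derivative_if_CR)
  qed
  then show ?thesis
    by (simp add: holomorphic_on_def field_differentiable_at_within)
qed

lemma holomorphic_norm_eq_on_ball_imp_unimodular_multiple:
  assumes H: "H holomorphic_on ball z0 r" and G: "G holomorphic_on ball z0 r" and "r > 0"
    and nonzero: "\<And>z. z \<in> ball z0 r \<Longrightarrow> G z \<noteq> 0"
    and norm_eq: "\<And>z. z \<in> ball z0 r \<Longrightarrow> norm (H z) = norm (G z)"
  shows "\<exists>c. norm c = 1 \<and> (\<forall>z\<in>ball z0 r. H z = c * G z)"
proof -
  define c where "c = H z0 / G z0"
  have "(\<lambda>z. H z / G z) holomorphic_on ball z0 r"
    using nonzero by (intro holomorphic_intros H G)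
  moreover have unimodular: "norm (H z / G z) = 1" if "z \<in> ball z0 r" for z
    using nonzero[OF that] norm_eq[OF that] by (simp add: norm_divide)
  ultimately have "(\<lambda>z. H z / G z) constant_on ball z0 r"
    using \<open>r > 0\<close> by (intro maximum_modulus_principle[of _ _ "ball z0 r" z0]) auto
  then have "H z / G z = c" if "z \<in> ball z0 r" for z
    using that \<open>r > 0\<close> unfolding constant_on_def c_def by (metis centre_in_ball)
  then have "H z = c * G z" if "z \<in> ball z0 r" for z
    using nonzero[OF that] that by (simp add: divide_eq_eq)
  moreover have "norm c = 1"
    using unimodular \<open>r > 0\<close> by (simp add: c_def)
  ultimately show ?thesis
    by blast
qed

lemma holomorphic_norm_eq_imp_unimodular_multiple:
  assumes H: "H holomorphic_on S" and G: "G holomorphic_on S" and S: "open S" "connected S"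
    and U: "open U" "U \<noteq> {}" "U \<subseteq> S" and norm_eq: "\<And>z. z \<in> U \<Longrightarrow> norm (H z) = norm (G z)"
  shows "\<exists>c. norm c = 1 \<and> (\<forall>z\<in>S. H z = c * G z)"
proof (cases "\<forall>z\<in>U. G z = 0")
  case True
  then have "H z = 1 * G z" if "z \<in> U" for z
    using norm_eq[OF that] that by simp
  then have "H z = 1 * G z" if "z \<in> S" for z
    using analytic_continuation_open[OF U(1) S(1) U(2) S(2) U(3) H _ _ that] G
    by (auto intro: holomorphic_intros)
  then show ?thesis
    by (metis norm_one)
next
  case False
  then obtain z0 where "z0 \<in> U" "G z0 \<noteq> 0"
    by blast
  have "continuous_on U G"
    using holomorphic_on_imp_continuous_on[OF holomorphic_on_subset[OF G U(3)]] .
  then have "open (U \<inter> G -` (- {0}))"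
    using continuous_open_preimage[OF _ U(1) open_Compl] by blast
  then obtain r where "r > 0" and ball: "ball z0 r \<subseteq> U \<inter> G -` (- {0})"
    using \<open>z0 \<in> U\<close> \<open>G z0 \<noteq> 0\<close> openE by blast
  then have "ball z0 r \<subseteq> S"
    using U(3) by blast
  obtain c where "norm c = 1" and on_ball: "\<And>z. z \<in> ball z0 r \<Longrightarrow> H z = c * G z"
    using holomorphic_norm_eq_on_ball_imp_unimodular_multiple[of H z0 r G] ball \<open>ball z0 r \<subseteq> S\<close>
      \<open>r > 0\<close> norm_eq holomorphic_on_subset[OF H] holomorphic_on_subset[OF G] by blast
  have "(\<lambda>z. c * G z) holomorphic_on S"
    using G by (intro holomorphic_intros)
  then have "H z = c * G z" if "z \<in> S" for z
    using analytic_continuation_open[OF open_ball S(1) _ S(2) \<open>ball z0 r \<subseteq> S\<close> H _ on_ball that]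
      \<open>r > 0\<close> by simp
  with \<open>norm c = 1\<close> show ?thesis
    by blast
qed

lemma entire_Re_level_set_infinite:
  assumes hol: "F holomorphic_on UNIV" and nonconst: "\<not> F constant_on UNIV"
  shows "infinite {z. Re (F z) = t}"
proof
  define A where "A = Complex t -` F ` {z. Re (F z) = t}"
  assume "finite {z. Re (F z) = t}"
  then have "finite A"
    unfolding A_def by (intro finite_vimageI finite_imageI) (auto simp: inj_on_def)
  obtain s1 where "s1 \<notin> A"
    using ex_new_if_finite[OF infinite_UNIV_char_0 \<open>finite A\<close>] by blast
  moreover obtain s2 where "s2 \<notin> insert s1 A"
    using ex_new_if_finite[OF infinite_UNIV_char_0] \<open>finite A\<close> by blast
  moreover have "Complex t s \<notin> range F" if "s \<notin> A" for s
  proof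
    assume "Complex t s \<in> range F"
    then obtain z where z: "F z = Complex t s"
      by auto
    have "F z \<in> F ` {z. Re (F z) = t}"
      by (rule imageI) (simp add: z)
    with that z show False
      by (simp add: A_def)
  qed
  ultimately have omitted: "range F \<inter> {Complex t s1, Complex t s2} = {}"
    and distinct: "Complex t s1 \<noteq> Complex t s2"
    by auto
  obtain c where "F = (\<lambda>_. c)"
    using little_Picard[OF hol distinct omitted] .
  with nonconst show False
    by (simp add: constant_on_def)
qed

lemma unimodular_square_mult_add_cnj:
  assumes "cmod m = 1"
  shows "m\<^sup>2 * w + cnj w = m * of_real (2 * Re (m * w))"
proof -
  have "m * cnj m = 1"
    using complex_norm_square[of m] assms by simp
  moreover have "m * of_real (2 * Re (m * w)) = m\<^sup>2 * w + (m * cnj m) * cnj w"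
    by (simp only: complex_add_cnj[symmetric]) (simp add: algebra_simps power2_eq_square)
  ultimately show ?thesis
    by simp
qed

lemma has_derivative_if_dz_unimodular_multiple:
  assumes "f differentiable at z" and "cmod m = 1" and dz: "dz f z = m\<^sup>2 * cnj (dzbar f z)"
  shows "(f has_derivative (\<lambda>k. m * of_real (Re (2 * m * cnj (dzbar f z) * k)))) (at z)"
proof -
  obtain D where D: "(f has_derivative D) (at z)"
    using assms(1) by (auto simp: differentiable_def)
  have "D k = m * of_real (Re (2 * m * cnj (dzbar f z) * k))" for k
    using has_derivative_eq_wirtinger[OF D, of k]
      unimodular_square_mult_add_cnj[OF \<open>cmod m = 1\<close>, of "cnj (dzbar f z) * k"]
    by (simp add: dz algebra_simps)
  then have "D = (\<lambda>k. m * of_real (Re (2 * m * cnj (dzbar f z) * k)))"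
    by (intro ext)
  with D show ?thesis
    by simp
qed

lemma real_affine_form_if_has_derivative:
  fixes f :: "complex \<Rightarrow> complex"
  assumes "m \<noteq> 0" and "K holomorphic_on UNIV"
    and f_deriv: "\<And>z. (f has_derivative (\<lambda>k. m * of_real (Re (K z * k)))) (at z)"
  obtains a F where "\<And>z. f z = a + m * of_real (Re (F z))" "F holomorphic_on UNIV"
proof -
  obtain F where F: "\<And>z. (F has_field_derivative K z) (at z)"
    using holomorphic_convex_primitive'[OF convex_UNIV open_UNIV assms(2)]
    by (metis UNIV_I at_within_open open_UNIV)
  then have "F holomorphic_on UNIV"
    by (auto simp: holomorphic_on_open)
  have "((\<lambda>z. inverse m * f z - of_real (Re (F z))) has_derivative (\<lambda>k. 0)) (at z within UNIV)" for z
  proof -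
    have "((\<lambda>z. inverse m * f z - of_real (Re (F z))) has_derivative
        (\<lambda>k. inverse m * (m * of_real (Re (K z * k))) - of_real (Re (K z * k)))) (at z)"
      using F[of z] unfolding has_field_derivative_def
      by (auto intro!: derivative_eq_intros f_deriv)
    then show ?thesis
      using \<open>m \<noteq> 0\<close> by (simp add: mult.assoc[symmetric])
  qed
  then have "\<exists>a0. \<forall>z\<in>UNIV. inverse m * f z - of_real (Re (F z)) = a0"
    by (intro has_derivative_zero_constant convex_UNIV)
  then obtain a0 where a0: "\<And>z. inverse m * f z - of_real (Re (F z)) = a0"
    by blast
  have "f z = m * a0 + m * of_real (Re (F z))" for z
    using a0[of z] \<open>m \<noteq> 0\<close> by (simp add: field_simps)
  with that \<open>F holomorphic_on UNIV\<close> show ?thesis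
    by blast
qed

lemma real_affine_form_if_dz_unimodular_multiple:
  assumes f: "\<And>z. f differentiable at z"
    and hol: "(\<lambda>z. cnj (dzbar f z)) holomorphic_on UNIV"
    and "cmod c = 1" and dz: "\<And>z. dz f z = c * cnj (dzbar f z)"
  obtains a m F where "\<And>z. f z = a + m * of_real (Re (F z))" "m \<noteq> 0" "F holomorphic_on UNIV"
proof -
  define m where "m = csqrt c"
  have "cmod m = 1" and "m\<^sup>2 = c"
    using \<open>cmod c = 1\<close> by (simp_all add: m_def)
  then have "m \<noteq> 0"
    by auto
  have "(\<lambda>z. 2 * m * cnj (dzbar f z)) holomorphic_on UNIV"
    by (intro holomorphic_intros hol)
  moreover have "(f has_derivative (\<lambda>k. m * of_real (Re (2 * m * cnj (dzbar f z) * k)))) (at z)" for z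
    using has_derivative_if_dz_unimodular_multiple[OF f \<open>cmod m = 1\<close>] dz \<open>m\<^sup>2 = c\<close> by simp
  ultimately obtain a F where "\<And>z. f z = a + m * of_real (Re (F z))" "F holomorphic_on UNIV"
    by (rule real_affine_form_if_has_derivative[OF \<open>m \<noteq> 0\<close>]) (rule that)
  with that \<open>m \<noteq> 0\<close> show ?thesis
    by blast
qed

lemma range_real_affine_entire:
  assumes hol: "F holomorphic_on UNIV" and "m \<noteq> 0" and f: "\<And>z. f z = a + m * of_real (Re (F z))"
  shows "((\<exists>c. range f = {c}) \<or> is_line (range f)) \<and> (\<exists>w. Val_infinite f w)"
proof (cases "F constant_on UNIV")
  case True
  then have "f z = f 0" for z
    using f unfolding constant_on_def by (metis UNIV_I)
  then have "range f = {f 0}" and "{z. f z = f 0} = UNIV"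
    by auto
  moreover have "infinite (UNIV :: complex set)"
    by (rule infinite_UNIV_char_0)
  ultimately show ?thesis
    unfolding Val_infinite_def by metis
next
  case False
  note level_infinite = entire_Re_level_set_infinite[OF hol False]
  have "range f = {a + of_real t * m | t. True}"
  proof (intro equalityI subsetI)
    fix w assume "w \<in> {a + of_real t * m | t. True}"
    then obtain t where t: "w = a + of_real t * m"
      by blast
    obtain z where "Re (F z) = t"
      using infinite_imp_nonempty[OF level_infinite[of t]] by blast
    then have "f z = w"
      using f[of z] t by (simp add: mult.commute)
    then show "w \<in> range f"
      by blast
  qed (auto simp: f mult.commute)
  then have "is_line (range f)"
    using \<open>m \<noteq> 0\<close> unfolding is_line_def by blast
  moreover have "Val_infinite f a"
  proof -
    have "{z. Re (F z) = 0} \<subseteq> {z. f z = a}"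
      using f by auto
    then show ?thesis
      unfolding Val_infinite_def using level_infinite infinite_super by blast
  qed
  ultimately show ?thesis
    by blast
qed

theorem lemma5p1:
  fixes f :: "complex \<Rightarrow> complex"
  assumes "harmonic f"
    and "interior (critset f) \<noteq> {}"
  shows "((\<exists>c. range f = {c}) \<or> is_line (range f)) \<and>
         critset f = UNIV \<and> (\<exists>w0. Val_infinite f w0)"
proof -
  have hol_dz: "dz f holomorphic_on UNIV"
    and hol_dzbar: "(\<lambda>z. cnj (dzbar f z)) holomorphic_on UNIV"
    using assms(1) by (rule harmonic_dz_holomorphic, rule harmonic_cnj_dzbar_holomorphic)
  have norm_eq: "norm (dz f z) = norm (cnj (dzbar f z))" if "z \<in> interior (critset f)" for z
    using interior_subset[of "critset f"] that jac_eq_wirtinger[of f z]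
    by (auto simp: critset_def power2_eq_iff_nonneg)
  obtain c where "cmod c = 1" and dz: "\<And>z. dz f z = c * cnj (dzbar f z)"
    using holomorphic_norm_eq_imp_unimodular_multiple[OF hol_dz hol_dzbar open_UNIV connected_UNIV
        open_interior assms(2) subset_UNIV norm_eq] by blast
  then have "critset f = UNIV"
    by (auto simp: critset_def jac_eq_wirtinger norm_mult)
  have f_diff: "f differentiable at z" for z
    using assms(1) by (simp add: harmonic_def)
  obtain a m F where "\<And>z. f z = a + m * of_real (Re (F z))" "m \<noteq> 0" "F holomorphic_on UNIV"
    by (rule real_affine_form_if_dz_unimodular_multiple[OF f_diff hol_dzbar \<open>cmod c = 1\<close> dz])
      (rule that)
  with \<open>critset f = UNIV\<close> show ?thesis
    using range_real_affine_entire[of F m f a] by blast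
qed

end
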